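(* For every population instance and pool size bound $G$, $$\max_{T\in\mathcal T^3}u(T)\le \tfrac73\max_{T\in\tilde{\mathcal T}^3}u(T)\quad\text{and}\quad \max_{T\in\mathcal T^4}u(T)\le \tfrac{15}{4}\max_{T\in\tilde{\mathcal T}^4}u(T).$$ That is, $\mathrm{gain}(3)\le 7/3$ and $\mathrm{gain}(4)\le 15/4$.
   Context: Population $[n]=\{1,\dots,n\}$. Individual $i$ is healthy with probability $q_i\in[0,1]$, independently, and has utility $u_i\ge0$. For $S\subseteq[n]$, $q_S=\prod_{i\in S}q_i$ ($q_\emptyset=1$). A test is a set $t\subseteq[n]$ with $|t|\le G$; it is negative iff all its members are healthy. A testing regime with budget $B$ is a tuple $T=(t_1,\dots,t_B)$ of tests; $\mathcal T^B$ is the set of all of them and $\tilde{\mathcal T}^B$ the set of non-overlapping ones (tests pairwise disjoint). $P^T_i$ is the probability that $i$ is in at least one negative test of $T$; welfare is $u(T)=\sum_iu_iP^T_i$. $\mathrm{gain}(B)$ is the supremum over instances of $\max_{\mathcal T^B}u/\max_{\tilde{\mathcal T}^B}u$. *)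

theory Defs
  imports "HOL-Analysis.Analysis"
begin

text \<open>Population [n] = {1..n}. A health state is the set H of healthy individuals;
  under independence it has probability
  prod q over H times prod (1 - q) over the rest.\<close>

definition state_prob :: "nat \<Rightarrow> (nat \<Rightarrow> real) \<Rightarrow> nat set \<Rightarrow> real" where
  "state_prob n q H = (\<Prod>i\<in>H. q i) * (\<Prod>i\<in>{1..n} - H. 1 - q i)"

definition test_negative :: "nat set \<Rightarrow> nat set \<Rightarrow> bool" where
  "test_negative H t \<longleftrightarrow> t \<subseteq> H"

definition regimes :: "nat \<Rightarrow> nat \<Rightarrow> nat \<Rightarrow> nat set list set" where
  "regimes n G B = {T. length T = B \<and> (\<forall>t\<in>set T. t \<subseteq> {1..n} \<and> card t \<le> G)}"

definition non_overlapping :: "nat set list \<Rightarrow> bool" where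
  "non_overlapping T \<longleftrightarrow> (\<forall>a < length T. \<forall>b < length T. a \<noteq> b \<longrightarrow> T ! a \<inter> T ! b = {})"

definition regimes_no :: "nat \<Rightarrow> nat \<Rightarrow> nat \<Rightarrow> nat set list set" where
  "regimes_no n G B = {T \<in> regimes n G B. non_overlapping T}"

definition P_in_neg :: "nat \<Rightarrow> (nat \<Rightarrow> real) \<Rightarrow> nat set list \<Rightarrow> nat \<Rightarrow> real" where
  "P_in_neg n q T i =
     (\<Sum>H\<in>Pow {1..n}. if (\<exists>t\<in>set T. i \<in> t \<and> test_negative H t) then state_prob n q H else 0)"

definition welfare :: "nat \<Rightarrow> (nat \<Rightarrow> real) \<Rightarrow> (nat \<Rightarrow> real) \<Rightarrow> nat set list \<Rightarrow> real" where
  "welfare n q u T = (\<Sum>i\<in>{1..n}. u i * P_in_neg n q T i)"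

end

theory Submission
  imports Defs
begin

text \<open>Group the individuals by the set S \<subseteq> {0..<B} of indices of the tests that contain
  them. The cells of the nonempty patterns are pairwise disjoint, each lies inside a test, and
  replacing the tests by the cells only helps the individuals of the chosen cells: if a test
  containing i is negative, so is the (smaller) cell of i. Since there are 2^B - 1 nonempty
  patterns, some B of them carry at least a fraction B / (2^B - 1) of the welfare, and using
  their cells as the B tests gives a non-overlapping regime. This yields gain(B) \<le> (2^B - 1)/B,
  which is 7/3 for B = 3 and 15/4 for B = 4.\<close>

definition tests_containing :: "nat set list \<Rightarrow> nat \<Rightarrow> nat set" where
  "tests_containing T i = {j. j < length T \<and> i \<in> T ! j}"

definition pattern_cell :: "nat \<Rightarrow> nat set list \<Rightarrow> nat set \<Rightarrow> nat set" where
  "pattern_cell n T S = {i \<in> {1..n}. tests_containing T i = S}"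

lemma exists_card_subset_sum_ge_average:
  fixes d :: "'a \<Rightarrow> real"
  assumes "finite F" "k \<le> card F"
  shows "\<exists>A\<subseteq>F. card A = k \<and> real k * sum d F \<le> real (card F) * sum d A"
  using assms
proof (induction "card F" arbitrary: F rule: less_induct)
  case less
  show ?case
  proof (cases "card F = k")
    case True
    then show ?thesis by (intro exI[of _ F]) auto
  next
    case False
    with less.prems have "k < card F" by auto
    then have "F \<noteq> {}" by auto
    obtain x where x: "x \<in> F" "\<forall>y\<in>F. d x \<le> d y"
      using ex_is_arg_min_if_finite[OF less.prems(1) \<open>F \<noteq> {}\<close>, of d]
      by (auto simp: is_arg_min_linorder)
    define F' where "F' = F - {x}"
    have card_F': "card F = card F' + 1"
      using x(1) less.prems(1) \<open>k < card F\<close> by (simp add: F'_def)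
    obtain A where A: "A \<subseteq> F'" "card A = k" "real k * sum d F' \<le> real (card F') * sum d A"
      using less.hyps[of F'] less.prems(1) card_F' \<open>k < card F\<close> by (auto simp: F'_def)
    have "(\<Sum>y\<in>A. d x) \<le> sum d A"
      using A(1) x(2) by (intro sum_mono) (auto simp: F'_def)
    then have "real k * d x \<le> sum d A"
      using A(2) by simp
    moreover have "sum d F = d x + sum d F'"
      using x(1) less.prems(1) by (simp add: F'_def sum.remove)
    ultimately have "real k * sum d F \<le> real (card F) * sum d A"
      using A(3) card_F' by (simp add: algebra_simps)
    with A show ?thesis by (auto simp: F'_def)
  qed
qed

lemma state_prob_nonneg:
  assumes "\<forall>i\<in>{1..n}. 0 \<le> q i \<and> q i \<le> 1" "H \<subseteq> {1..n}"
  shows "0 \<le> state_prob n q H"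
  unfolding state_prob_def using assms by (intro mult_nonneg_nonneg prod_nonneg) auto

lemma P_in_neg_nonneg:
  assumes "\<forall>i\<in>{1..n}. 0 \<le> q i \<and> q i \<le> 1"
  shows "0 \<le> P_in_neg n q T i"
  unfolding P_in_neg_def using state_prob_nonneg[OF assms] by (intro sum_nonneg) auto

lemma P_in_neg_mono:
  assumes "\<forall>i\<in>{1..n}. 0 \<le> q i \<and> q i \<le> 1"
    and "\<And>H t. H \<subseteq> {1..n} \<Longrightarrow> t \<in> set T \<Longrightarrow> i \<in> t \<Longrightarrow> t \<subseteq> H \<Longrightarrow> \<exists>t'\<in>set T'. i \<in> t' \<and> t' \<subseteq> H"
  shows "P_in_neg n q T i \<le> P_in_neg n q T' i"
  unfolding P_in_neg_def test_negative_def
proof (rule sum_mono)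
  fix H assume "H \<in> Pow {1..n}"
  then have "H \<subseteq> {1..n}"
    by simp
  then have "0 \<le> state_prob n q H"
    and "(\<exists>t\<in>set T. i \<in> t \<and> t \<subseteq> H) \<longrightarrow> (\<exists>t'\<in>set T'. i \<in> t' \<and> t' \<subseteq> H)"
    using state_prob_nonneg[OF assms(1)] assms(2)[of H] by auto
  then show "(if \<exists>t\<in>set T. i \<in> t \<and> t \<subseteq> H then state_prob n q H else 0)
      \<le> (if \<exists>t\<in>set T'. i \<in> t \<and> t \<subseteq> H then state_prob n q H else 0)"
    by auto
qed

lemma P_in_neg_eq_0:
  assumes "tests_containing T i = {}"
  shows "P_in_neg n q T i = 0"
  unfolding P_in_neg_def test_negative_def
  using assms by (intro sum.neutral) (auto simp: tests_containing_def in_set_conv_nth)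

lemma sum_le_welfare:
  assumes "\<forall>i\<in>{1..n}. 0 \<le> q i \<and> q i \<le> 1" "\<forall>i\<in>{1..n}. 0 \<le> u i" "I \<subseteq> {1..n}"
  shows "(\<Sum>i\<in>I. u i * P_in_neg n q T i) \<le> welfare n q u T"
  unfolding welfare_def using assms P_in_neg_nonneg[OF assms(1)]
  by (intro sum_mono2) auto

lemma welfare_eq_sum_pattern_cells:
  "welfare n q u T =
     (\<Sum>S\<in>Pow {..<length T} - {{}}. \<Sum>i\<in>pattern_cell n T S. u i * P_in_neg n q T i)"
proof -
  have "welfare n q u T = (\<Sum>S\<in>Pow {..<length T}. \<Sum>i\<in>pattern_cell n T S. u i * P_in_neg n q T i)"
    unfolding welfare_def pattern_cell_def
    by (rule sum.group[symmetric]) (auto simp: tests_containing_def)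
  also have "\<dots> = (\<Sum>i\<in>pattern_cell n T {}. u i * P_in_neg n q T i)
      + (\<Sum>S\<in>Pow {..<length T} - {{}}. \<Sum>i\<in>pattern_cell n T S. u i * P_in_neg n q T i)"
    by (rule sum.remove) auto
  finally show ?thesis
    by (simp add: pattern_cell_def P_in_neg_eq_0)
qed

lemma pattern_cell_subset_test:
  "j \<in> S \<Longrightarrow> pattern_cell n T S \<subseteq> T ! j"
  by (auto simp: pattern_cell_def tests_containing_def)

lemma pattern_cells_in_regimes_no:
  assumes "T \<in> regimes n G B" "distinct L" "set L \<subseteq> Pow {..<B} - {{}}"
  shows "map (pattern_cell n T) L \<in> regimes_no n G (length L)"
proof -
  have "t \<subseteq> {1..n} \<and> card t \<le> G" if t: "t \<in> set (map (pattern_cell n T) L)" for t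
  proof -
    obtain S where S: "S \<in> set L" "t = pattern_cell n T S"
      using t by auto
    then obtain j where "j \<in> S" "j < B"
      using assms(3) by blast
    then have "t \<subseteq> T ! j" "T ! j \<in> set T" "T ! j \<subseteq> {1..n}" "card (T ! j) \<le> G"
      using assms(1) S(2) pattern_cell_subset_test by (auto simp: regimes_def)
    moreover have "card t \<le> card (T ! j)"
      using \<open>t \<subseteq> T ! j\<close> \<open>T ! j \<subseteq> {1..n}\<close> by (meson card_mono finite_atLeastAtMost finite_subset)
    ultimately show ?thesis
      by auto
  qed
  moreover have "non_overlapping (map (pattern_cell n T) L)"
    using assms(2) by (auto simp: non_overlapping_def pattern_cell_def nth_eq_iff_index_eq)
  ultimately show ?thesis
    by (simp add: regimes_no_def regimes_def)
qed

lemma sum_pattern_cells_le_welfare: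
  assumes q: "\<forall>i\<in>{1..n}. 0 \<le> q i \<and> q i \<le> 1" and u: "\<forall>i\<in>{1..n}. 0 \<le> u i"
  shows "(\<Sum>S\<in>set L. \<Sum>i\<in>pattern_cell n T S. u i * P_in_neg n q T i)
    \<le> welfare n q u (map (pattern_cell n T) L)"
    (is "_ \<le> welfare n q u ?T'")
proof -
  have "P_in_neg n q T i \<le> P_in_neg n q ?T' i"
    if S: "S \<in> set L" and i: "i \<in> pattern_cell n T S" for S i
  proof (rule P_in_neg_mono[OF q])
    fix H t assume "H \<subseteq> {1..n}" "t \<in> set T" "i \<in> t" "t \<subseteq> H"
    then obtain j where "j \<in> S" "T ! j \<subseteq> H"
      using i by (auto simp: pattern_cell_def tests_containing_def in_set_conv_nth)
    then show "\<exists>t'\<in>set ?T'. i \<in> t' \<and> t' \<subseteq> H"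
      using S i pattern_cell_subset_test[of j S n T] by auto
  qed
  then have "(\<Sum>S\<in>set L. \<Sum>i\<in>pattern_cell n T S. u i * P_in_neg n q T i)
      \<le> (\<Sum>S\<in>set L. \<Sum>i\<in>pattern_cell n T S. u i * P_in_neg n q ?T' i)"
    using u by (intro sum_mono mult_left_mono) (auto simp: pattern_cell_def)
  also have "\<dots> = (\<Sum>i\<in>(\<Union>S\<in>set L. pattern_cell n T S). u i * P_in_neg n q ?T' i)"
    by (rule sum.UNION_disjoint[symmetric]) (auto simp: pattern_cell_def)
  also have "\<dots> \<le> welfare n q u ?T'"
    using q u by (intro sum_le_welfare) (auto simp: pattern_cell_def)
  finally show ?thesis .
qed

lemma exists_regime_no_welfare_ge:
  assumes q: "\<forall>i\<in>{1..n}. 0 \<le> q i \<and> q i \<le> 1" and u: "\<forall>i\<in>{1..n}. 0 \<le> u i"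
    and T: "T \<in> regimes n G B"
  shows "\<exists>T'\<in>regimes_no n G B. real B * welfare n q u T \<le> real (2^B - 1) * welfare n q u T'"
proof -
  define F where "F = Pow {..<B} - {{}}"
  define d where "d S = (\<Sum>i\<in>pattern_cell n T S. u i * P_in_neg n q T i)" for S
  have "length T = B"
    using T by (simp add: regimes_def)
  then have welfare_T: "welfare n q u T = sum d F"
    by (simp add: welfare_eq_sum_pattern_cells F_def d_def)
  have card_F: "card F = 2^B - 1"
    by (simp add: F_def card_Pow)
  have "finite F"
    by (simp add: F_def)
  moreover have "B \<le> card F"
    using card_F less_exp[of B] by linarith
  ultimately obtain A where A: "A \<subseteq> F" "card A = B" "real B * sum d F \<le> real (card F) * sum d A"
    using exists_card_subset_sum_ge_average by blast
  obtain L where L: "set L = A" "distinct L"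
    using finite_distinct_list finite_subset[OF A(1) \<open>finite F\<close>] by blast
  define T' where "T' = map (pattern_cell n T) L"
  have "length L = B"
    using A(2) L distinct_card by metis
  then have "T' \<in> regimes_no n G B"
    using pattern_cells_in_regimes_no[OF T L(2)] A(1) L(1) by (simp add: T'_def F_def)
  moreover have "sum d A \<le> welfare n q u T'"
    using sum_pattern_cells_le_welfare[OF q u, of T L] L by (simp add: T'_def d_def)
  then have "real B * welfare n q u T \<le> real (card F) * welfare n q u T'"
    using A(3) welfare_T by (metis mult_left_mono of_nat_0_le_iff order_trans)
  ultimately show ?thesis
    using card_F by auto
qed

lemma Max_welfare_regimes_le:
  assumes "\<forall>i\<in>{1..n}. 0 \<le> q i \<and> q i \<le> 1" "\<forall>i\<in>{1..n}. 0 \<le> u i" "1 \<le> B"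
  shows "Max (welfare n q u ` regimes n G B)
    \<le> real (2^B - 1) / real B * Max (welfare n q u ` regimes_no n G B)"
proof -
  have finite_regimes: "finite (regimes n G B)"
    by (rule finite_subset[OF _ finite_lists_length_eq[of "Pow {1..n}" B]])
       (auto simp: regimes_def)
  then have "finite (regimes_no n G B)"
    by (rule finite_subset[rotated]) (auto simp: regimes_no_def)
  have "replicate B {} \<in> regimes n G B"
    by (simp add: regimes_def)
  then obtain T where T: "T \<in> regimes n G B" "welfare n q u T = Max (welfare n q u ` regimes n G B)"
    using finite_regimes by (metis (mono_tags, lifting) Max_in empty_iff finite_imageI image_iff image_is_empty)
  obtain T' where T': "T' \<in> regimes_no n G B"
    "real B * welfare n q u T \<le> real (2^B - 1) * welfare n q u T'"
    using exists_regime_no_welfare_ge[OF assms(1,2) T(1)] by blast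
  have "welfare n q u T \<le> real (2^B - 1) / real B * welfare n q u T'"
    using T'(2) assms(3) by (simp add: field_simps)
  also have "\<dots> \<le> real (2^B - 1) / real B * Max (welfare n q u ` regimes_no n G B)"
    using T'(1) \<open>finite (regimes_no n G B)\<close> by (intro mult_left_mono Max_ge) auto
  finally show ?thesis
    using T(2) by simp
qed

theorem mainTheorem6:
  fixes n G :: nat and q u :: "nat \<Rightarrow> real"
  assumes "\<forall>i\<in>{1..n}. 0 \<le> q i \<and> q i \<le> 1"
    and "\<forall>i\<in>{1..n}. 0 \<le> u i"
  shows "Max (welfare n q u ` regimes n G 3) \<le> 7/3 * Max (welfare n q u ` regimes_no n G 3)
    \<and> Max (welfare n q u ` regimes n G 4) \<le> 15/4 * Max (welfare n q u ` regimes_no n G 4)"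
  using Max_welfare_regimes_le[OF assms, of 3 G] Max_welfare_regimes_le[OF assms, of 4 G]
  by simp

end
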